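(* The synthesis problem in $\lambda_H$ is undecidable: there is no algorithm that, given a finite component library $\Lambda$ (over a finite set of type constructors) and a ground query type $t$, decides whether there exists a normal-form term $E$ with $\cdot\vdash E:t$.
   Context: Fix a set of type constructors, each with a fixed arity, and an infinite set of type variables. Base types are $B ::= \tau \mid C\,B_1\ldots B_k$; ground base types $b$ contain no type variables. Types are $T ::= B\mid B\to T$; ground types $t ::= b\mid b\to t$. A polytype is $\forall\tau_1\ldots\tau_n.T$. A component library $\Lambda$ is a finite map from component names $c$ to polytypes; the arity of $c$ is the number of arrows in $\Lambda(c)$. A substitution $\sigma$ maps type variables to base types (identity elsewhere). Terms ($\lambda_H$, η-long): application terms $e::=x\mid c(e_1,\ldots,e_m)$ with $m$ the arity of $c$; normal-form terms $E::=e\mid\lambda x.E$. A typing environment $\Gamma$ maps variables to ground base types. Declarative typing $\Gamma\vdash E:t$: (Var) if $\Gamma(x)=b$ then $\Gamma\vdash x:b$; (App) if $\Lambda(c)=\forall\bar\tau.T$, $\sigma T=b_1\to\cdots\to b_m\to b$ is ground and $\Gamma\vdash e_i:b_i$ for all $i$, then $\Gamma\vdash c(e_1,\ldots,e_m):b$; (Fun) if $\Gamma,x{:}b\vdash E:t$ then $\Gamma\vdash\lambda x.E:b\to t$. A synthesis problem is a pair $(\Lambda,t)$ and a solution is a normal-form term $E$ with $\cdot\vdash E:t$. *)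

theory Defs
  imports Main "HOL-Library.Nat_Bijection"
begin

datatype recf =
    Zero
  | Succ
  | Proj nat
  | Comp recf "recf list"
  | Prim recf recf
  | Mn recf

inductive eval :: "recf \<Rightarrow> nat list \<Rightarrow> nat \<Rightarrow> bool" where
  eval_Zero: "eval Zero xs 0"
| eval_Succ: "eval Succ (x # xs) (Suc x)"
| eval_Proj: "i < length xs \<Longrightarrow> eval (Proj i) xs (xs ! i)"
| eval_Comp: "list_all2 (\<lambda>g y. eval g xs y) gs ys \<Longrightarrow> eval f ys z \<Longrightarrow> eval (Comp f gs) xs z"
| eval_Prim0: "eval f xs y \<Longrightarrow> eval (Prim f g) (0 # xs) y"
| eval_PrimS: "eval (Prim f g) (n # xs) y \<Longrightarrow> eval g (y # n # xs) z
                 \<Longrightarrow> eval (Prim f g) (Suc n # xs) z"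
| eval_Mn: "eval f (n # xs) 0 \<Longrightarrow> (\<forall>m<n. \<exists>y. eval f (m # xs) (Suc y))
                 \<Longrightarrow> eval (Mn f) xs n"

definition decidable :: "nat set \<Rightarrow> bool" where
  "decidable A \<longleftrightarrow> (\<exists>f. \<forall>n. (n \<in> A \<longrightarrow> eval f [n] 0) \<and> (n \<notin> A \<longrightarrow> eval f [n] 1))"

text \<open>A type constructor is identified by a pair (name, arity); thus every constructor has a
  fixed arity, and any finite signature of constructors is available.  Type variables are nats.\<close>
type_synonym tcon = "nat \<times> nat"

datatype btype = TVar nat | TCon tcon "btype list"

datatype ty = Base btype | Arr btype ty

type_synonym polytype = "nat list \<times> ty"

fun wf_btype :: "btype \<Rightarrow> bool" where
  "wf_btype (TVar a) = True"
| "wf_btype (TCon c bs) = (length bs = snd c \<and> (\<forall>b\<in>set bs. wf_btype b))"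

fun wf_ty :: "ty \<Rightarrow> bool" where
  "wf_ty (Base b) = wf_btype b"
| "wf_ty (Arr b t) = (wf_btype b \<and> wf_ty t)"

fun tvars_b :: "btype \<Rightarrow> nat set" where
  "tvars_b (TVar a) = {a}"
| "tvars_b (TCon c bs) = (\<Union>b\<in>set bs. tvars_b b)"

fun tvars :: "ty \<Rightarrow> nat set" where
  "tvars (Base b) = tvars_b b"
| "tvars (Arr b t) = tvars_b b \<union> tvars t"

definition ground_b :: "btype \<Rightarrow> bool" where
  "ground_b b \<longleftrightarrow> tvars_b b = {}"

definition ground_ty :: "ty \<Rightarrow> bool" where
  "ground_ty t \<longleftrightarrow> tvars t = {}"

fun subst_b :: "(nat \<Rightarrow> btype) \<Rightarrow> btype \<Rightarrow> btype" where
  "subst_b \<sigma> (TVar a) = \<sigma> a"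
| "subst_b \<sigma> (TCon c bs) = TCon c (map (subst_b \<sigma>) bs)"

fun subst_ty :: "(nat \<Rightarrow> btype) \<Rightarrow> ty \<Rightarrow> ty" where
  "subst_ty \<sigma> (Base b) = Base (subst_b \<sigma> b)"
| "subst_ty \<sigma> (Arr b t) = Arr (subst_b \<sigma> b) (subst_ty \<sigma> t)"

fun args :: "ty \<Rightarrow> btype list" where
  "args (Base b) = []"
| "args (Arr b t) = b # args t"

fun res :: "ty \<Rightarrow> btype" where
  "res (Base b) = b"
| "res (Arr b t) = res t"

type_synonym library = "(nat \<times> polytype) list"

definition wf_poly :: "polytype \<Rightarrow> bool" where
  "wf_poly p \<longleftrightarrow> wf_ty (snd p) \<and> tvars (snd p) \<subseteq> set (fst p)"

definition wf_library :: "library \<Rightarrow> bool" where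
  "wf_library L \<longleftrightarrow> distinct (map fst L) \<and> (\<forall>(c, p)\<in>set L. wf_poly p)"

datatype aterm = V nat | C nat "aterm list"

datatype nterm = A aterm | L nat nterm

inductive has_type_a :: "library \<Rightarrow> (nat \<rightharpoonup> btype) \<Rightarrow> aterm \<Rightarrow> btype \<Rightarrow> bool" where
  T_Var: "\<Gamma> x = Some b \<Longrightarrow> has_type_a Lib \<Gamma> (V x) b"
| T_App: "map_of Lib c = Some (vs, T) \<Longrightarrow> (\<forall>a. wf_btype (\<sigma> a)) \<Longrightarrow>
          ground_ty (subst_ty \<sigma> T) \<Longrightarrow>
          args (subst_ty \<sigma> T) = bs \<Longrightarrow> res (subst_ty \<sigma> T) = b \<Longrightarrow>
          list_all2 (has_type_a Lib \<Gamma>) es bs \<Longrightarrow>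
          has_type_a Lib \<Gamma> (C c es) b"

inductive has_type :: "library \<Rightarrow> (nat \<rightharpoonup> btype) \<Rightarrow> nterm \<Rightarrow> ty \<Rightarrow> bool" where
  T_Base: "has_type_a Lib \<Gamma> e b \<Longrightarrow> has_type Lib \<Gamma> (A e) (Base b)"
| T_Fun: "has_type Lib (\<Gamma>(x \<mapsto> b)) E t \<Longrightarrow> has_type Lib \<Gamma> (L x E) (Arr b t)"

fun enc_b :: "btype \<Rightarrow> nat" where
  "enc_b (TVar a) = prod_encode (0, a)"
| "enc_b (TCon c bs) = prod_encode (1, prod_encode (prod_encode c, list_encode (map enc_b bs)))"

fun enc_ty :: "ty \<Rightarrow> nat" where
  "enc_ty (Base b) = prod_encode (0, enc_b b)"
| "enc_ty (Arr b t) = prod_encode (1, prod_encode (enc_b b, enc_ty t))"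

definition enc_poly :: "polytype \<Rightarrow> nat" where
  "enc_poly p = prod_encode (list_encode (fst p), enc_ty (snd p))"

definition enc_library :: "library \<Rightarrow> nat" where
  "enc_library Lib = list_encode (map (\<lambda>(c, p). prod_encode (c, enc_poly p)) Lib)"

definition enc_problem :: "library \<Rightarrow> ty \<Rightarrow> nat" where
  "enc_problem Lib t = prod_encode (enc_library Lib, enc_ty t)"

definition SYNTH :: "nat set" where
  "SYNTH = {enc_problem Lib t | Lib t. wf_library Lib \<and> wf_ty t \<and> ground_ty t \<and>
                                      (\<exists>E. has_type Lib Map.empty E t)}"

end

theory Submission
  imports Defs
begin

text \<open>
  A base type is inhabited in the empty environment exactly when it is derivable in the Horn-clause
  program whose clauses are the component types: a ground instance of a component with argument types
  \<open>b\<^sub>1, \<dots>, b\<^sub>m\<close> and result \<open>b\<close> is a rule from \<open>b\<^sub>1, \<dots>, b\<^sub>m\<close> to \<open>b\<close>.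
  Encoding numbers, lists and recursive functions as ground base types, one fixed library makes the
  type \<open>HaltsA f n\<close> inhabited iff \<open>f\<close> halts on \<open>n\<close>.  Since the code of the synthesis problem
  for \<open>HaltsA f n\<close> is a recursive function of the code of \<open>f\<close> and of \<open>n\<close>, a decision procedure
  for synthesis would decide whether a function halts on its own code, which diagonalization refutes.
\<close>

inductive_cases eval_CompE: "eval (Comp f gs) xs y"
inductive_cases eval_PrimE: "eval (Prim f g) xs y"
inductive_cases eval_MnE: "eval (Mn f) xs y"
inductive_cases eval_ProjE: "eval (Proj i) xs y"

lemma eval_deterministic: "eval f xs y \<Longrightarrow> eval f xs y' \<Longrightarrow> y = y'"
proof (induction arbitrary: y' rule: eval.induct)
  case (eval_Comp xs gs ys f z)
  from eval_Comp.prems obtain ys' where ys': "list_all2 (\<lambda>g y. eval g xs y) gs ys'" "eval f ys' y'"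
    by (rule eval_CompE)
  from eval_Comp.IH(1) ys'(1) have "ys = ys'"
    by (induction arbitrary: ys' rule: list_all2_induct) (auto simp: list_all2_Cons1)
  with eval_Comp.IH(2) ys'(2) show ?case by blast
next
  case (eval_PrimS f g n xs y z)
  from eval_PrimS.prems show ?case
    by (rule eval_PrimE) (use eval_PrimS.IH in auto)
next
  case (eval_Mn f n xs)
  from eval_Mn.prems have "eval f (y' # xs) 0" "\<forall>m<y'. \<exists>y. eval f (m # xs) (Suc y)"
    by (auto elim: eval_MnE)
  show ?case
  proof (cases rule: linorder_cases[of n y'])
    case less
    then show ?thesis
      using eval_Mn.IH(1) \<open>\<forall>m<y'. \<exists>y. eval f (m # xs) (Suc y)\<close> by (metis Zero_not_Suc)
  next
    case equal
    then show ?thesis .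
  next
    case greater
    then show ?thesis
      using eval_Mn.IH(2) \<open>eval f (y' # xs) 0\<close> by (metis Zero_not_Suc)
  qed
qed (erule eval.cases; simp)+

lemma eval_Comp1: "eval f [a] z \<Longrightarrow> eval g xs a \<Longrightarrow> eval (Comp f [g]) xs z"
  by (rule eval_Comp[of _ _ "[a]"]) auto

lemma eval_Comp2: "eval f [a, b] z \<Longrightarrow> eval g1 xs a \<Longrightarrow> eval g2 xs b \<Longrightarrow> eval (Comp f [g1, g2]) xs z"
  by (rule eval_Comp[of _ _ "[a, b]"]) auto

lemma eval_Proj0: "eval (Proj 0) (x # xs) x"
  using eval_Proj[of 0 "x # xs"] by simp

lemma eval_Proj1: "eval (Proj 1) (x # y # xs) y"
  using eval_Proj[of 1 "x # y # xs"] by simp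

lemma eval_Succ_Comp: "eval g xs a \<Longrightarrow> eval (Comp Succ [g]) xs (Suc a)"
  by (rule eval_Comp1) (auto intro: eval_Succ)

fun const_rf :: "nat \<Rightarrow> recf" where
  "const_rf 0 = Zero"
| "const_rf (Suc k) = Comp Succ [const_rf k]"

lemma eval_const_rf: "eval (const_rf k) xs k"
  by (induction k) (auto intro: eval_Zero eval_Succ_Comp)

lemma eval_Prim_funpow:
  assumes step: "\<And>y xs. eval g (y # xs) (h y)"
  shows "eval (Prim (const_rf c) g) [n] ((h ^^ n) c)"
proof (induction n)
  case 0
  show ?case using eval_Prim0[OF eval_const_rf] by simp
next
  case (Suc n)
  show ?case using eval_PrimS[OF Suc step] by simp
qed

definition add_rf :: recf where
  "add_rf = Prim (Proj 0) (Comp Succ [Proj 0])"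

lemma eval_add_rf: "eval add_rf [a, b] (a + b)"
proof (induction a)
  case 0
  show ?case unfolding add_rf_def using eval_Prim0[OF eval_Proj0] by simp
next
  case (Suc a)
  show ?case
    unfolding add_rf_def using eval_PrimS[OF Suc[unfolded add_rf_def] eval_Succ_Comp[OF eval_Proj0]]
    by simp
qed

definition triangle_rf :: recf where
  "triangle_rf = Prim Zero (Comp add_rf [Proj 0, Comp Succ [Proj 1]])"

lemma eval_triangle_rf: "eval triangle_rf [n] (triangle n)"
proof (induction n)
  case 0
  show ?case unfolding triangle_rf_def using eval_Prim0[OF eval_Zero] by simp
next
  case (Suc n)
  have "eval (Comp add_rf [Proj 0, Comp Succ [Proj 1]]) [triangle n, n] (triangle n + Suc n)"
    by (intro eval_Comp2[OF eval_add_rf] eval_Proj0 eval_Succ_Comp eval_Proj1)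
  then show ?case
    unfolding triangle_rf_def using eval_PrimS[OF Suc[unfolded triangle_rf_def]] by simp
qed

definition prod_encode_rf :: recf where
  "prod_encode_rf = Comp add_rf [Comp triangle_rf [Comp add_rf [Proj 0, Proj 1]], Proj 0]"

lemma eval_prod_encode_rf: "eval prod_encode_rf [a, b] (prod_encode (a, b))"
  unfolding prod_encode_rf_def prod_encode_def prod.case
  by (intro eval_Comp2[OF eval_add_rf] eval_Comp1[OF eval_triangle_rf] eval_Proj0 eval_Proj1)

fun list_encode_rf :: "recf list \<Rightarrow> recf" where
  "list_encode_rf [] = Zero"
| "list_encode_rf (g # gs) = Comp Succ [Comp prod_encode_rf [g, list_encode_rf gs]]"

lemma eval_list_encode_rf:
  "list_all2 (\<lambda>g y. eval g xs y) gs ys \<Longrightarrow> eval (list_encode_rf gs) xs (list_encode ys)"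
  by (induction rule: list_all2_induct)
     (auto intro: eval_Zero eval_Succ_Comp eval_Comp2 eval_prod_encode_rf)

definition not_rf :: recf where
  "not_rf = Prim (const_rf 1) Zero"

lemma eval_not_rf: "eval not_rf [0] 1" "eval not_rf [1] 0"
proof -
  show zero: "eval not_rf [0] 1"
    unfolding not_rf_def by (rule eval_Prim0[OF eval_const_rf])
  show "eval not_rf [1] 0"
    using eval_PrimS[OF zero[unfolded not_rf_def] eval_Zero] unfolding not_rf_def by simp
qed

lemma eval_Mn_Proj1_iff: "eval (Mn (Proj 1)) [u] z \<longleftrightarrow> u = 0 \<and> z = 0"
proof
  assume "eval (Mn (Proj 1)) [u] z"
  then have "eval (Proj 1) [z, u] 0" "\<forall>m<z. \<exists>y. eval (Proj 1) [m, u] (Suc y)"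
    by (auto elim: eval_MnE)
  then show "u = 0 \<and> z = 0"
    by (auto elim!: eval_ProjE)
next
  assume "u = 0 \<and> z = 0"
  then show "eval (Mn (Proj 1)) [u] z"
    by (auto intro: eval_Mn eval_Proj1[of _ _ "[]", simplified])
qed

lemma not_decidable_if_self_halting_reduces:
  fixes code :: "recf \<Rightarrow> nat" and r :: "nat \<Rightarrow> nat"
  assumes eval_R: "\<And>n. eval R [n] (r n)"
    and reduction: "\<And>f. r (code f) \<in> S \<longleftrightarrow> (\<exists>z. eval f [code f] z)"
  shows "\<not> decidable S"
proof
  assume "decidable S"
  then obtain d where d: "\<And>n. n \<in> S \<Longrightarrow> eval d [n] 0" "\<And>n. n \<notin> S \<Longrightarrow> eval d [n] 1"
    unfolding decidable_def by blast
  define g where "g = Comp (Mn (Proj 1)) [Comp not_rf [Comp d [R]]]"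
  have halts_iff: "(\<exists>z. eval g [n] z) \<longleftrightarrow> r n \<notin> S" for n
  proof -
    have not_d: "eval (Comp not_rf [Comp d [R]]) [n] (if r n \<in> S then 1 else 0)"
      using d eval_not_rf by (auto intro: eval_Comp1 eval_R)
    have "(\<exists>z. eval g [n] z) \<longleftrightarrow> (\<exists>z. eval (Mn (Proj 1)) [if r n \<in> S then 1 else 0] z)"
    proof
      assume "\<exists>z. eval g [n] z"
      then obtain z where "eval g [n] z" ..
      then obtain u where "eval (Comp not_rf [Comp d [R]]) [n] u" "eval (Mn (Proj 1)) [u] z"
        unfolding g_def by (rule eval_CompE) (auto simp: list_all2_Cons1)
      then show "\<exists>z. eval (Mn (Proj 1)) [if r n \<in> S then 1 else 0] z"
        using eval_deterministic[OF not_d] by blast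
    qed (auto simp: g_def intro: eval_Comp1 not_d)
    then show ?thesis using eval_Mn_Proj1_iff by auto
  qed
  show False
    using halts_iff[of "code g"] reduction[of g] by blast
qed

definition inhabited :: "library \<Rightarrow> btype \<Rightarrow> bool" where
  "inhabited Lib b \<longleftrightarrow> (\<exists>e. has_type_a Lib Map.empty e b)"

lemma ground_subst_b: "(\<And>a. ground_b (\<sigma> a)) \<Longrightarrow> ground_b (subst_b \<sigma> b)"
  by (induction b) (auto simp: ground_b_def)

lemma ground_subst_ty: "(\<And>a. ground_b (\<sigma> a)) \<Longrightarrow> ground_ty (subst_ty \<sigma> T)"
  using ground_subst_b[of \<sigma>] by (induction T) (auto simp: ground_ty_def ground_b_def)

lemma inhabited_instance:
  assumes "map_of Lib c = Some (vs, T)" "\<And>a. wf_btype (\<sigma> a)" "\<And>a. ground_b (\<sigma> a)"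
    and "\<forall>b\<in>set (args (subst_ty \<sigma> T)). inhabited Lib b"
  shows "inhabited Lib (res (subst_ty \<sigma> T))"
proof -
  have "\<exists>es. list_all2 (has_type_a Lib Map.empty) es bs" if "\<forall>b\<in>set bs. inhabited Lib b" for bs
    using that by (induction bs) (auto simp: inhabited_def list_all2_Cons2)
  with assms(4) obtain es where "list_all2 (has_type_a Lib Map.empty) es (args (subst_ty \<sigma> T))"
    by blast
  then have "has_type_a Lib Map.empty (C c es) (res (subst_ty \<sigma> T))"
    using assms(1-3) ground_subst_ty by (blast intro: T_App)
  then show ?thesis unfolding inhabited_def ..
qed

lemma inhabited_induct[consumes 1, case_names component]:
  assumes "inhabited Lib b"
    and "\<And>c vs T \<sigma>. map_of Lib c = Some (vs, T) \<Longrightarrow> \<forall>b'\<in>set (args (subst_ty \<sigma> T)). P b'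
           \<Longrightarrow> P (res (subst_ty \<sigma> T))"
  shows "P b"
proof -
  from assms(1) obtain e where "has_type_a Lib Map.empty e b" unfolding inhabited_def ..
  moreover have "has_type_a Lib' \<Gamma> e b \<Longrightarrow> Lib' = Lib \<Longrightarrow> \<Gamma> = Map.empty \<Longrightarrow> P b" for Lib' \<Gamma> e b
  proof (induction rule: has_type_a.induct)
    case (T_App Lib' c vs T \<sigma> bs b \<Gamma> es)
    from T_App.IH T_App.prems have "\<forall>b'\<in>set bs. P b'"
      by (auto simp: list_all2_conv_all_nth in_set_conv_nth)
    then show ?case
      using assms(2) T_App.hyps(1,4,5) T_App.prems(1) by blast
  qed simp
  ultimately show ?thesis by blast
qed

lemma inj_enc_b: "inj enc_b"
proof (rule injI)
  show "enc_b a = enc_b b \<Longrightarrow> a = b" for a b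
  proof (induction a arbitrary: b)
    case (TVar x)
    then show ?case by (cases b) auto
  next
    case (TCon c bs)
    from TCon.prems obtain bs' where "b = TCon c bs'" "map enc_b bs = map enc_b bs'"
      by (cases b) (auto simp: list_encode_eq)
    moreover from this(2) have "bs = bs'"
      by (rule list.inj_map_strong[rotated]) (rule TCon.IH)
    ultimately show ?case by simp
  qed
qed

lemma inj_enc_ty: "inj enc_ty"
proof (rule injI)
  show "enc_ty s = enc_ty t \<Longrightarrow> s = t" for s t
  proof (induction s arbitrary: t)
    case (Base b)
    then show ?case by (cases t) (auto simp: inj_eq[OF inj_enc_b])
  next
    case (Arr b s)
    from Arr.prems obtain s' where "t = Arr b s'" "enc_ty s = enc_ty s'"
      by (cases t) (auto simp: inj_eq[OF inj_enc_b])
    with Arr.IH show ?case by blast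
  qed
qed

lemma inj_enc_library: "inj enc_library"
proof -
  have entry: "inj (\<lambda>(c, p). prod_encode (c, enc_poly p))"
    by (rule injI) (auto simp: enc_poly_def list_encode_eq inj_eq[OF inj_enc_ty])
  show ?thesis
    by (rule injI) (simp add: enc_library_def list_encode_eq inj_map_eq_map[OF entry])
qed

lemma enc_problem_eq_iff: "enc_problem Lib t = enc_problem Lib' t' \<longleftrightarrow> Lib = Lib' \<and> t = t'"
  by (auto simp: enc_problem_def inj_eq[OF inj_enc_library] inj_eq[OF inj_enc_ty])

definition wf_ground :: "btype \<Rightarrow> bool" where
  "wf_ground b \<longleftrightarrow> wf_btype b \<and> ground_b b"

lemma wf_ground_TCon[simp]:
  "wf_ground (TCon c bs) \<longleftrightarrow> length bs = snd c \<and> (\<forall>b\<in>set bs. wf_ground b)"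
  by (auto simp: wf_ground_def ground_b_def)

inductive_cases has_type_BaseE: "has_type Lib \<Gamma> E (Base b)"

lemma enc_problem_Base_in_SYNTH_iff:
  assumes "wf_library Lib" "wf_ground b"
  shows "enc_problem Lib (Base b) \<in> SYNTH \<longleftrightarrow> inhabited Lib b"
proof -
  have "has_type Lib Map.empty E (Base b) \<longleftrightarrow> (\<exists>e. E = A e \<and> has_type_a Lib Map.empty e b)" for E
    by (auto elim: has_type_BaseE intro: T_Base)
  with assms show ?thesis
    by (auto simp: SYNTH_def enc_problem_eq_iff inhabited_def wf_ground_def ground_ty_def ground_b_def)
qed

abbreviation "ZeroN \<equiv> TCon (0, 0) []"
abbreviation "SucN b \<equiv> TCon (1, 1) [b]"
abbreviation "NilL \<equiv> TCon (2, 0) []"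
abbreviation "ConsL b bs \<equiv> TCon (3, 2) [b, bs]"
abbreviation "ZeroR \<equiv> TCon (4, 0) []"
abbreviation "SuccR \<equiv> TCon (5, 0) []"
abbreviation "ProjR i \<equiv> TCon (6, 1) [i]"
abbreviation "CompR f gs \<equiv> TCon (7, 2) [f, gs]"
abbreviation "PrimR f g \<equiv> TCon (8, 2) [f, g]"
abbreviation "MnR f \<equiv> TCon (9, 1) [f]"
abbreviation "EvalA f xs z \<equiv> TCon (10, 3) [f, xs, z]"
abbreviation "EvalsA gs xs ys \<equiv> TCon (11, 3) [gs, xs, ys]"
abbreviation "NthA xs i y \<equiv> TCon (12, 3) [xs, i, y]"
abbreviation "PositiveBelowA f xs n \<equiv> TCon (13, 3) [f, xs, n]"
abbreviation "HaltsA f n \<equiv> TCon (14, 2) [f, n]"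

fun nat_ty :: "nat \<Rightarrow> btype" where
  "nat_ty 0 = ZeroN"
| "nat_ty (Suc n) = SucN (nat_ty n)"

fun list_ty :: "btype list \<Rightarrow> btype" where
  "list_ty [] = NilL"
| "list_ty (b # bs) = ConsL b (list_ty bs)"

fun recf_ty :: "recf \<Rightarrow> btype" where
  "recf_ty Zero = ZeroR"
| "recf_ty Succ = SuccR"
| "recf_ty (Proj i) = ProjR (nat_ty i)"
| "recf_ty (Comp f gs) = CompR (recf_ty f) (list_ty (map recf_ty gs))"
| "recf_ty (Prim f g) = PrimR (recf_ty f) (recf_ty g)"
| "recf_ty (Mn f) = MnR (recf_ty f)"

abbreviation "nats_ty xs \<equiv> list_ty (map nat_ty xs)"
abbreviation "recfs_ty gs \<equiv> list_ty (map recf_ty gs)"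

lemma nat_ty_eq_iff[simp]: "nat_ty m = nat_ty n \<longleftrightarrow> m = n"
  by (induction m arbitrary: n) (case_tac n; simp)+

lemma list_ty_eq_iff[simp]: "list_ty bs = list_ty bs' \<longleftrightarrow> bs = bs'"
  by (induction bs arbitrary: bs') (case_tac bs'; simp)+

lemma wf_ground_list_ty: "\<forall>b\<in>set bs. wf_ground b \<Longrightarrow> wf_ground (list_ty bs)"
  by (induction bs) auto

lemma wf_ground_nat_ty[simp]: "wf_ground (nat_ty n)"
  by (induction n) auto

lemma wf_ground_nats_ty[simp]: "wf_ground (nats_ty xs)"
  by (rule wf_ground_list_ty) auto

lemma wf_ground_recf_ty[simp]: "wf_ground (recf_ty f)"
  by (induction f) (auto intro!: wf_ground_list_ty)

lemma wf_ground_recfs_ty[simp]: "wf_ground (recfs_ty gs)"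
  by (rule wf_ground_list_ty) auto

lemma recf_ty_inverse[simp]:
  "ZeroR = recf_ty f \<longleftrightarrow> f = Zero"
  "SuccR = recf_ty f \<longleftrightarrow> f = Succ"
  "ProjR b = recf_ty f \<longleftrightarrow> (\<exists>i. f = Proj i \<and> b = nat_ty i)"
  "CompR b c = recf_ty f \<longleftrightarrow> (\<exists>g gs. f = Comp g gs \<and> b = recf_ty g \<and> c = recfs_ty gs)"
  "PrimR b c = recf_ty f \<longleftrightarrow> (\<exists>g h. f = Prim g h \<and> b = recf_ty g \<and> c = recf_ty h)"
  "MnR b = recf_ty f \<longleftrightarrow> (\<exists>g. f = Mn g \<and> b = recf_ty g)"
  by (cases f; auto)+

lemma nat_ty_inverse[simp]:
  "ZeroN = nat_ty n \<longleftrightarrow> n = 0"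
  "SucN b = nat_ty n \<longleftrightarrow> (\<exists>m. n = Suc m \<and> b = nat_ty m)"
  "nat_ty n = ZeroN \<longleftrightarrow> n = 0"
  "nat_ty n = SucN b \<longleftrightarrow> (\<exists>m. n = Suc m \<and> nat_ty m = b)"
  by (cases n; auto)+

lemma map_nat_ty_eq_iff[simp]: "map nat_ty xs = map nat_ty ys \<longleftrightarrow> xs = ys"
  by (simp add: inj_map_eq_map inj_def)

lemma list_ty_inverse[simp]:
  "NilL = list_ty bs \<longleftrightarrow> bs = []"
  "ConsL b c = list_ty bs \<longleftrightarrow> (\<exists>b' bs'. bs = b' # bs' \<and> b = b' \<and> c = list_ty bs')"
  by (cases bs; auto)+

definition clause :: "btype list \<Rightarrow> btype \<Rightarrow> ty" where
  "clause ps q = foldr Arr ps (Base q)"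

lemma args_clause[simp]: "args (clause ps q) = ps"
  and res_clause[simp]: "res (clause ps q) = q"
  and subst_ty_clause[simp]: "subst_ty \<sigma> (clause ps q) = clause (map (subst_b \<sigma>) ps) (subst_b \<sigma> q)"
  by (induction ps) (simp_all add: clause_def)

abbreviation (input) "v \<equiv> TVar"

definition eval_clauses :: "ty list" where
  "eval_clauses = [
    clause [] (EvalA ZeroR (v 0) ZeroN),
    clause [] (EvalA SuccR (ConsL (v 0) (v 1)) (SucN (v 0))),
    clause [NthA (v 1) (v 0) (v 2)] (EvalA (ProjR (v 0)) (v 1) (v 2)),
    clause [EvalsA (v 1) (v 2) (v 3), EvalA (v 0) (v 3) (v 4)] (EvalA (CompR (v 0) (v 1)) (v 2) (v 4)),
    clause [] (EvalsA NilL (v 0) NilL),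
    clause [EvalA (v 0) (v 2) (v 3), EvalsA (v 1) (v 2) (v 4)]
      (EvalsA (ConsL (v 0) (v 1)) (v 2) (ConsL (v 3) (v 4))),
    clause [EvalA (v 0) (v 2) (v 3)] (EvalA (PrimR (v 0) (v 1)) (ConsL ZeroN (v 2)) (v 3)),
    clause [EvalA (PrimR (v 0) (v 1)) (ConsL (v 2) (v 3)) (v 4), EvalA (v 1) (ConsL (v 4) (ConsL (v 2) (v 3))) (v 5)]
      (EvalA (PrimR (v 0) (v 1)) (ConsL (SucN (v 2)) (v 3)) (v 5)),
    clause [EvalA (v 0) (ConsL (v 2) (v 1)) ZeroN, PositiveBelowA (v 0) (v 1) (v 2)] (EvalA (MnR (v 0)) (v 1) (v 2)),
    clause [] (PositiveBelowA (v 0) (v 1) ZeroN),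
    clause [PositiveBelowA (v 0) (v 1) (v 2), EvalA (v 0) (ConsL (v 2) (v 1)) (SucN (v 3))]
      (PositiveBelowA (v 0) (v 1) (SucN (v 2))),
    clause [] (NthA (ConsL (v 0) (v 1)) ZeroN (v 0)),
    clause [NthA (v 1) (v 2) (v 3)] (NthA (ConsL (v 0) (v 1)) (SucN (v 2)) (v 3)),
    clause [EvalA (v 0) (ConsL (v 1) NilL) (v 2)] (HaltsA (v 0) (v 1))
  ]"

text \<open>
  Clauses such as \<open>EvalA ZeroR (v 0) ZeroN\<close> also derive atoms whose arguments encode nothing, so the
  semantics is universal in the inputs: an atom is valid if every decoding of its inputs satisfies it.
\<close>

inductive valid_atom :: "btype \<Rightarrow> bool" where
  "(\<forall>f xs. a = recf_ty f \<longrightarrow> b = nats_ty xs \<longrightarrow> (\<exists>z. c = nat_ty z \<and> eval f xs z))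
    \<Longrightarrow> valid_atom (EvalA a b c)"
| "(\<forall>gs xs. a = recfs_ty gs \<longrightarrow> b = nats_ty xs \<longrightarrow>
      (\<exists>ys. c = nats_ty ys \<and> list_all2 (\<lambda>g y. eval g xs y) gs ys))
    \<Longrightarrow> valid_atom (EvalsA a b c)"
| "(\<forall>xs i. a = nats_ty xs \<longrightarrow> b = nat_ty i \<longrightarrow> i < length xs \<and> c = nat_ty (xs ! i))
    \<Longrightarrow> valid_atom (NthA a b c)"
| "(\<forall>f xs. a = recf_ty f \<longrightarrow> b = nats_ty xs \<longrightarrow>
      (\<exists>n. c = nat_ty n \<and> (\<forall>m<n. \<exists>y. eval f (m # xs) (Suc y))))
    \<Longrightarrow> valid_atom (PositiveBelowA a b c)"
| "(\<forall>f n. a = recf_ty f \<longrightarrow> b = nat_ty n \<longrightarrow> (\<exists>z. eval f [n] z))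
    \<Longrightarrow> valid_atom (HaltsA a b)"

inductive_simps valid_atom_simps:
  "valid_atom (EvalA a b c)" "valid_atom (EvalsA a b c)" "valid_atom (NthA a b c)"
  "valid_atom (PositiveBelowA a b c)" "valid_atom (HaltsA a b)"

named_theorems valid_clause

text \<open>The simplifier rewrites the arity \<open>1\<close> to \<open>Suc 0\<close> (\<open>One_nat_def\<close>), after which terms no
  longer match the abbreviations \<open>SucN\<close>, \<open>ProjR\<close> and \<open>MnR\<close>; hence \<open>simp del: One_nat_def\<close> below.\<close>

lemma valid_Zero_clause[valid_clause]: "valid_atom (EvalA ZeroR a ZeroN)"
  by (auto simp: valid_atom_simps intro: eval_Zero)

lemma valid_Succ_clause[valid_clause]: "valid_atom (EvalA SuccR (ConsL a b) (SucN a))"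
  by (auto simp del: One_nat_def simp: valid_atom_simps map_eq_Cons_conv intro: eval_Succ)

lemma valid_Proj_clause[valid_clause]: "valid_atom (NthA b a c) \<Longrightarrow> valid_atom (EvalA (ProjR a) b c)"
  by (auto simp del: One_nat_def simp: valid_atom_simps intro: eval_Proj)

lemma valid_Comp_clause[valid_clause]:
  "valid_atom (EvalsA b c d) \<Longrightarrow> valid_atom (EvalA a d e) \<Longrightarrow> valid_atom (EvalA (CompR a b) c e)"
  by (fastforce simp: valid_atom_simps intro: eval_Comp)

lemma valid_Nil_clause[valid_clause]: "valid_atom (EvalsA NilL a NilL)"
  by (auto simp: valid_atom_simps)

lemma valid_Cons_clause[valid_clause]:
  "valid_atom (EvalA a c d) \<Longrightarrow> valid_atom (EvalsA b c e) \<Longrightarrow> valid_atom (EvalsA (ConsL a b) c (ConsL d e))"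
  by (fastforce simp: valid_atom_simps map_eq_Cons_conv)

lemma valid_Prim0_clause[valid_clause]: "valid_atom (EvalA a c d) \<Longrightarrow> valid_atom (EvalA (PrimR a b) (ConsL ZeroN c) d)"
  by (auto simp: valid_atom_simps map_eq_Cons_conv intro!: eval_Prim0)

lemma valid_PrimS_clause[valid_clause]:
  "valid_atom (EvalA (PrimR a b) (ConsL c d) e) \<Longrightarrow> valid_atom (EvalA b (ConsL e (ConsL c d)) h) \<Longrightarrow>
   valid_atom (EvalA (PrimR a b) (ConsL (SucN c) d) h)"
  by (fastforce simp del: One_nat_def simp: valid_atom_simps map_eq_Cons_conv intro: eval_PrimS)

lemma valid_Mn_clause[valid_clause]:
  "valid_atom (EvalA a (ConsL c b) ZeroN) \<Longrightarrow> valid_atom (PositiveBelowA a b c) \<Longrightarrow>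
   valid_atom (EvalA (MnR a) b c)"
  by (fastforce simp del: One_nat_def simp: valid_atom_simps map_eq_Cons_conv intro: eval_Mn)

lemma valid_PositiveBelow0_clause[valid_clause]: "valid_atom (PositiveBelowA a b ZeroN)"
  by (auto simp: valid_atom_simps)

lemma valid_PositiveBelowS_clause[valid_clause]:
  "valid_atom (PositiveBelowA a b c) \<Longrightarrow> valid_atom (EvalA a (ConsL c b) (SucN d)) \<Longrightarrow>
   valid_atom (PositiveBelowA a b (SucN c))"
  by (fastforce simp del: One_nat_def simp: valid_atom_simps map_eq_Cons_conv less_Suc_eq)

lemma valid_Nth0_clause[valid_clause]: "valid_atom (NthA (ConsL a b) ZeroN a)"
  by (auto simp: valid_atom_simps map_eq_Cons_conv)

lemma valid_NthS_clause[valid_clause]: "valid_atom (NthA b c d) \<Longrightarrow> valid_atom (NthA (ConsL a b) (SucN c) d)"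
  by (fastforce simp del: One_nat_def simp: valid_atom_simps map_eq_Cons_conv)

lemma valid_Halts_clause[valid_clause]: "valid_atom (EvalA a (ConsL b NilL) c) \<Longrightarrow> valid_atom (HaltsA a b)"
  by (fastforce simp del: One_nat_def simp: valid_atom_simps map_eq_Cons_conv)

lemma eval_clause_sound:
  assumes "T \<in> set eval_clauses" "\<forall>b\<in>set (args (subst_ty \<sigma> T)). valid_atom b"
  shows "valid_atom (res (subst_ty \<sigma> T))"
  using assms unfolding eval_clauses_def
  by (auto simp del: One_nat_def simp: valid_clause)

definition eval_library :: library where
  "eval_library = map (\<lambda>i. (i, ([0..<6], eval_clauses ! i))) [0..<length eval_clauses]"

lemma map_of_eval_library:
  "map_of eval_library c = Some p \<longleftrightarrow> c < length eval_clauses \<and> p = ([0..<6], eval_clauses ! c)"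
  by (auto simp: eval_library_def map_of_map_restrict restrict_map_def)

lemma wf_eval_library: "wf_library eval_library"
proof -
  have "wf_ty T \<and> tvars T \<subseteq> {0..<6}" if "T \<in> set eval_clauses" for T
    using that by (auto simp: eval_clauses_def clause_def)
  then show ?thesis
    by (auto simp: wf_library_def wf_poly_def eval_library_def comp_def)
qed

lemma inhabited_eval_library_valid: "inhabited eval_library b \<Longrightarrow> valid_atom b"
proof (induction rule: inhabited_induct)
  case (component c vs T \<sigma>)
  then show ?case
    by (auto simp: map_of_eval_library intro: eval_clause_sound)
qed

definition list_subst :: "btype list \<Rightarrow> nat \<Rightarrow> btype" where
  "list_subst ws a = (if a < length ws then ws ! a else NilL)"

lemma inhabited_by_eval_clause:
  assumes "i < length eval_clauses" "\<forall>w\<in>set ws. wf_ground w"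
    and "\<forall>p\<in>set (args (subst_ty (list_subst ws) (eval_clauses ! i))). inhabited eval_library p"
    and "res (subst_ty (list_subst ws) (eval_clauses ! i)) = b"
  shows "inhabited eval_library b"
proof -
  have "wf_ground (list_subst ws a)" for a
    using assms(2) by (simp add: list_subst_def)
  then show ?thesis
    using inhabited_instance[of eval_library i _ "eval_clauses ! i" "list_subst ws"] assms
    by (simp add: map_of_eval_library wf_ground_def)
qed

lemma inhabited_NthA:
  "i < length xs \<Longrightarrow> inhabited eval_library (NthA (nats_ty xs) (nat_ty i) (nat_ty (xs ! i)))"
proof (induction xs arbitrary: i)
  case (Cons x xs)
  show ?case
  proof (cases i)
    case 0
    then show ?thesis
      by (intro inhabited_by_eval_clause[where i=11 and ws="[nat_ty x, nats_ty xs]"])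
        (auto simp: eval_clauses_def list_subst_def)
  next
    case (Suc j)
    with Cons show ?thesis
      by (intro inhabited_by_eval_clause[where i=12 and ws="[nat_ty x, nats_ty xs, nat_ty j, nat_ty (xs ! j)]"])
        (auto simp: eval_clauses_def list_subst_def)
  qed
qed simp

lemma inhabited_EvalsA:
  "list_all2 (\<lambda>g y. inhabited eval_library (EvalA (recf_ty g) (nats_ty xs) (nat_ty y))) gs ys \<Longrightarrow>
   inhabited eval_library (EvalsA (recfs_ty gs) (nats_ty xs) (nats_ty ys))"
proof (induction rule: list_all2_induct)
  case Nil
  show ?case
    by (intro inhabited_by_eval_clause[where i=4 and ws="[nats_ty xs]"])
      (auto simp: eval_clauses_def list_subst_def)
next
  case (Cons g gs y ys)
  then show ?case
    by (intro inhabited_by_eval_clause[where i=5 and ws="[recf_ty g, recfs_ty gs, nats_ty xs, nat_ty y, nats_ty ys]"])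
      (auto simp: eval_clauses_def list_subst_def)
qed

lemma inhabited_PositiveBelowA:
  "\<forall>m<n. \<exists>y. inhabited eval_library (EvalA (recf_ty f) (nats_ty (m # xs)) (nat_ty (Suc y))) \<Longrightarrow>
   inhabited eval_library (PositiveBelowA (recf_ty f) (nats_ty xs) (nat_ty n))"
proof (induction n)
  case 0
  show ?case
    by (intro inhabited_by_eval_clause[where i=9 and ws="[recf_ty f, nats_ty xs]"])
      (auto simp: eval_clauses_def list_subst_def)
next
  case (Suc n)
  then obtain y where "inhabited eval_library (EvalA (recf_ty f) (nats_ty (n # xs)) (nat_ty (Suc y)))"
    by blast
  with Suc show ?case
    by (intro inhabited_by_eval_clause[where i=10 and ws="[recf_ty f, nats_ty xs, nat_ty n, nat_ty y]"])
      (auto simp: eval_clauses_def list_subst_def)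
qed

lemma inhabited_EvalA: "eval f xs z \<Longrightarrow> inhabited eval_library (EvalA (recf_ty f) (nats_ty xs) (nat_ty z))"
proof (induction rule: eval.induct)
  case (eval_Zero xs)
  show ?case
    by (intro inhabited_by_eval_clause[where i=0 and ws="[nats_ty xs]"])
      (auto simp: eval_clauses_def list_subst_def)
next
  case (eval_Succ x xs)
  show ?case
    by (intro inhabited_by_eval_clause[where i=1 and ws="[nat_ty x, nats_ty xs]"])
      (auto simp: eval_clauses_def list_subst_def)
next
  case (eval_Proj i xs)
  with inhabited_NthA show ?case
    by (intro inhabited_by_eval_clause[where i=2 and ws="[nat_ty i, nats_ty xs, nat_ty (xs ! i)]"])
      (auto simp: eval_clauses_def list_subst_def)
next
  case (eval_Comp xs gs ys f z)
  from eval_Comp.IH have "inhabited eval_library (EvalsA (recfs_ty gs) (nats_ty xs) (nats_ty ys))"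
    by (intro inhabited_EvalsA) (auto elim: list_all2_mono)
  with eval_Comp.IH show ?case
    by (intro inhabited_by_eval_clause[where i=3 and ws="[recf_ty f, recfs_ty gs, nats_ty xs, nats_ty ys, nat_ty z]"])
      (auto simp: eval_clauses_def list_subst_def)
next
  case (eval_Prim0 f xs y g)
  then show ?case
    by (intro inhabited_by_eval_clause[where i=6 and ws="[recf_ty f, recf_ty g, nats_ty xs, nat_ty y]"])
      (auto simp: eval_clauses_def list_subst_def)
next
  case (eval_PrimS f g n xs y z)
  then show ?case
    by (intro inhabited_by_eval_clause[where i=7 and ws="[recf_ty f, recf_ty g, nat_ty n, nats_ty xs, nat_ty y, nat_ty z]"])
      (auto simp: eval_clauses_def list_subst_def)
next
  case (eval_Mn f n xs)
  from eval_Mn.IH(2) have "inhabited eval_library (PositiveBelowA (recf_ty f) (nats_ty xs) (nat_ty n))"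
    by (intro inhabited_PositiveBelowA) blast
  with eval_Mn.IH(1) show ?case
    by (intro inhabited_by_eval_clause[where i=8 and ws="[recf_ty f, nats_ty xs, nat_ty n]"])
      (auto simp: eval_clauses_def list_subst_def)
qed

lemma inhabited_HaltsA_iff:
  "inhabited eval_library (HaltsA (recf_ty f) (nat_ty n)) \<longleftrightarrow> (\<exists>z. eval f [n] z)"
proof
  assume "inhabited eval_library (HaltsA (recf_ty f) (nat_ty n))"
  then show "\<exists>z. eval f [n] z"
    using inhabited_eval_library_valid by (fastforce simp: valid_atom_simps)
next
  assume "\<exists>z. eval f [n] z"
  then obtain z where "eval f [n] z" ..
  then show "inhabited eval_library (HaltsA (recf_ty f) (nat_ty n))"
    by (intro inhabited_by_eval_clause[where i=13 and ws="[recf_ty f, nat_ty n, nat_ty z]"])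
      (auto simp: eval_clauses_def list_subst_def dest: inhabited_EvalA)
qed

definition tcon_code :: "tcon \<Rightarrow> nat list \<Rightarrow> nat" where
  "tcon_code c ys = prod_encode (1, prod_encode (prod_encode c, list_encode ys))"

lemma enc_b_TCon: "enc_b (TCon c bs) = tcon_code c (map enc_b bs)"
  by (simp add: tcon_code_def)

definition tcon_code_rf :: "tcon \<Rightarrow> recf list \<Rightarrow> recf" where
  "tcon_code_rf c gs =
     Comp prod_encode_rf [const_rf 1, Comp prod_encode_rf [const_rf (prod_encode c), list_encode_rf gs]]"

lemma eval_tcon_code_rf:
  "list_all2 (\<lambda>g y. eval g xs y) gs ys \<Longrightarrow> eval (tcon_code_rf c gs) xs (tcon_code c ys)"
  unfolding tcon_code_rf_def tcon_code_def
  by (intro eval_Comp2[OF eval_prod_encode_rf] eval_const_rf eval_list_encode_rf)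

definition nat_ty_code_rf :: recf where
  "nat_ty_code_rf = Prim (const_rf (enc_b ZeroN)) (tcon_code_rf (1, 1) [Proj 0])"

lemma eval_nat_ty_code_rf: "eval nat_ty_code_rf [n] (enc_b (nat_ty n))"
proof -
  have "enc_b (nat_ty n) = ((\<lambda>y. tcon_code (1, 1) [y]) ^^ n) (enc_b ZeroN)"
    by (induction n) (simp_all add: enc_b_TCon del: enc_b.simps)
  moreover have "eval (tcon_code_rf (1, 1) [Proj 0]) (y # xs) (tcon_code (1, 1) [y])" for y xs
    by (intro eval_tcon_code_rf) (simp add: eval_Proj0)
  ultimately show ?thesis
    unfolding nat_ty_code_rf_def by (simp add: eval_Prim_funpow)
qed

definition halting_query :: "nat \<Rightarrow> nat" where
  "halting_query n =
     prod_encode (enc_library eval_library, prod_encode (0, tcon_code (14, 2) [n, enc_b (nat_ty n)]))"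

lemma halting_query_enc_b:
  "halting_query (enc_b b) = enc_problem eval_library (Base (HaltsA b (nat_ty (enc_b b))))"
  by (simp add: halting_query_def enc_problem_def tcon_code_def)

definition halting_query_rf :: recf where
  "halting_query_rf = Comp prod_encode_rf [const_rf (enc_library eval_library),
     Comp prod_encode_rf [Zero, tcon_code_rf (14, 2) [Proj 0, nat_ty_code_rf]]]"

lemma eval_halting_query_rf: "eval halting_query_rf [n] (halting_query n)"
  unfolding halting_query_rf_def halting_query_def
  by (intro eval_Comp2[OF eval_prod_encode_rf] eval_const_rf eval_Zero eval_tcon_code_rf)
    (simp add: eval_Proj0 eval_nat_ty_code_rf)

theorem mainTheorem13:
  shows "\<not> decidable SYNTH"
proof (rule not_decidable_if_self_halting_reduces[where code = "\<lambda>f. enc_b (recf_ty f)"])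
  show "eval halting_query_rf [n] (halting_query n)" for n
    by (rule eval_halting_query_rf)
  show "halting_query (enc_b (recf_ty f)) \<in> SYNTH \<longleftrightarrow> (\<exists>z. eval f [enc_b (recf_ty f)] z)" for f
    by (simp add: halting_query_enc_b enc_problem_Base_in_SYNTH_iff[OF wf_eval_library] inhabited_HaltsA_iff)
qed

end
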